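(* Let $E$ be a finite set, $\tau:2^E\to 2^E$, $A\subseteq E$ and $x\in A$. If $(E,\tau)$ is a violator space, then $x\in ex(A)$ if and only if $\tau(A)\neq\tau(A-\{x\})$. If $(E,\tau)$ is a convex space, then $x\in ex(A)$ implies $\tau(A)\neq\tau(A-\{x\})$.
   Context: $(E,\tau)$ is a violator space if (C1) $X\subseteq\tau(X)$ for all $X$, and (C22) $F\subseteq G\subseteq\tau(F)$ implies $\tau(G)=\tau(F)$. $(E,\tau)$ is a convex space if (C1) holds and (convexity) for all $X\subseteq Y\subseteq Z\subseteq E$ with $\tau(X)=\tau(Z)$ we have $\tau(Y)=\tau(X)$. An element $x\in A$ is an extreme point of $A$ if $x\notin\tau(A-\{x\})$; $ex(A)$ denotes the set of extreme points of $A$. *)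

theory Defs
  imports Main
begin

definition set_operator :: "'a set \<Rightarrow> ('a set \<Rightarrow> 'a set) \<Rightarrow> bool" where
  "set_operator E tau \<longleftrightarrow> (\<forall>X. X \<subseteq> E \<longrightarrow> tau X \<subseteq> E)"

definition violator_space :: "'a set \<Rightarrow> ('a set \<Rightarrow> 'a set) \<Rightarrow> bool" where
  "violator_space E tau \<longleftrightarrow>
     (\<forall>X. X \<subseteq> E \<longrightarrow> X \<subseteq> tau X) \<and>
     (\<forall>F G. F \<subseteq> E \<longrightarrow> G \<subseteq> E \<longrightarrow> F \<subseteq> G \<longrightarrow> G \<subseteq> tau F \<longrightarrow> tau G = tau F)"

definition convex_space :: "'a set \<Rightarrow> ('a set \<Rightarrow> 'a set) \<Rightarrow> bool" where
  "convex_space E tau \<longleftrightarrow>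
     (\<forall>X. X \<subseteq> E \<longrightarrow> X \<subseteq> tau X) \<and>
     (\<forall>X Y Z. X \<subseteq> Y \<longrightarrow> Y \<subseteq> Z \<longrightarrow> Z \<subseteq> E \<longrightarrow> tau X = tau Z \<longrightarrow> tau Y = tau X)"

definition ex_points :: "('a set \<Rightarrow> 'a set) \<Rightarrow> 'a set \<Rightarrow> 'a set" where
  "ex_points tau A = {x \<in> A. x \<notin> tau (A - {x})}"

end

theory Submission
  imports Defs
begin

lemma extensive_if_violator_space:
  assumes "violator_space E tau" and "X \<subseteq> E"
  shows "X \<subseteq> tau X"
  using assms unfolding violator_space_def by blast

lemma extensive_if_convex_space:
  assumes "convex_space E tau" and "X \<subseteq> E"
  shows "X \<subseteq> tau X"
  using assms unfolding convex_space_def by blast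

lemma ex_points_tau_remove_neq:
  assumes "A \<subseteq> tau A" and "x \<in> ex_points tau A"
  shows "tau A \<noteq> tau (A - {x})"
  using assms unfolding ex_points_def by auto

text \<open>If x is not extreme, then A - {x} \<subseteq> A \<subseteq> tau (A - {x}), so axiom (C22) applies.\<close>

lemma violator_space_tau_remove_eq:
  assumes vs: "violator_space E tau" and "A \<subseteq> E" and "x \<in> A"
    and not_ex: "x \<notin> ex_points tau A"
  shows "tau A = tau (A - {x})"
proof -
  have sub: "A - {x} \<subseteq> E" using \<open>A \<subseteq> E\<close> by auto
  have "x \<in> tau (A - {x})" using not_ex \<open>x \<in> A\<close> unfolding ex_points_def by auto
  moreover have "A - {x} \<subseteq> tau (A - {x})" using extensive_if_violator_space[OF vs sub] .
  ultimately have "A \<subseteq> tau (A - {x})" by auto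
  then show ?thesis
    using vs sub \<open>A \<subseteq> E\<close> unfolding violator_space_def by blast
qed

theorem mainTheorem11:
  fixes E :: "'a set" and tau :: "'a set \<Rightarrow> 'a set" and A :: "'a set" and x :: 'a
  assumes "finite E" and "set_operator E tau" and "A \<subseteq> E" and "x \<in> A"
  shows "(violator_space E tau \<longrightarrow> (x \<in> ex_points tau A \<longleftrightarrow> tau A \<noteq> tau (A - {x})))
       \<and> (convex_space E tau \<longrightarrow> (x \<in> ex_points tau A \<longrightarrow> tau A \<noteq> tau (A - {x})))"
proof (intro conjI impI)
  assume vs: "violator_space E tau"
  have "A \<subseteq> tau A" using extensive_if_violator_space[OF vs \<open>A \<subseteq> E\<close>] .
  then show "x \<in> ex_points tau A \<longleftrightarrow> tau A \<noteq> tau (A - {x})"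
    using ex_points_tau_remove_neq violator_space_tau_remove_eq[OF vs \<open>A \<subseteq> E\<close> \<open>x \<in> A\<close>]
    by metis
next
  assume "convex_space E tau" and "x \<in> ex_points tau A"
  then show "tau A \<noteq> tau (A - {x})"
    by (intro ex_points_tau_remove_neq extensive_if_convex_space[OF _ \<open>A \<subseteq> E\<close>])
qed

end
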